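(* Let $(X,d)\in\mathfrak U$ with $|X|\geqslant 2$, and suppose the diametral graph is $G_d=G[X_1,X_2]$ (complete bipartite with parts $X_1,X_2$). Considering the subspaces $(X_1,d)$ and $(X_2,d)$, we have $$\operatorname{Sp}(X)=\operatorname{Sp}(X_1)\cup\operatorname{Sp}(X_2)\cup\{\operatorname{diam}X\}$$ and $$\operatorname{Sp}(X_1)\cap\operatorname{Sp}(X_2)=\varnothing.$$
   Context: For a metric space $(X,d)$, $\operatorname{Sp}(X)=\{d(x,y): x,y\in X,\ x\neq y\}$ (empty for a one-point space) and $\operatorname{diam}X=\sup\{d(x,y):x,y\in X\}$. $\mathfrak U$ denotes the class of finite ultrametric spaces $X$ with $|\operatorname{Sp}(X)|=|X|-1$. The diametral graph $G_d$ of $(X,d)$ has vertex set $X$, with $\{u,v\}$ an edge iff $d(u,v)=\operatorname{diam}X$. $G[X_1,X_2]$ denotes the complete bipartite graph with parts $X_1,X_2$ (disjoint, nonempty, covering the vertex set; no edges inside a part, all edges between parts). *)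

theory Defs
  imports Complex_Main
begin

definition metric_on :: "'a set \<Rightarrow> ('a \<Rightarrow> 'a \<Rightarrow> real) \<Rightarrow> bool" where
  "metric_on X d \<longleftrightarrow>
     (\<forall>x\<in>X. \<forall>y\<in>X. d x y \<ge> 0 \<and> (d x y = 0 \<longleftrightarrow> x = y) \<and> d x y = d y x) \<and>
     (\<forall>x\<in>X. \<forall>y\<in>X. \<forall>z\<in>X. d x z \<le> d x y + d y z)"

definition ultrametric_on :: "'a set \<Rightarrow> ('a \<Rightarrow> 'a \<Rightarrow> real) \<Rightarrow> bool" where
  "ultrametric_on X d \<longleftrightarrow> metric_on X d \<and>
     (\<forall>x\<in>X. \<forall>y\<in>X. \<forall>z\<in>X. d x z \<le> max (d x y) (d y z))"

definition Sp :: "'a set \<Rightarrow> ('a \<Rightarrow> 'a \<Rightarrow> real) \<Rightarrow> real set" where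
  "Sp X d = {d x y | x y. x \<in> X \<and> y \<in> X \<and> x \<noteq> y}"

definition diam_on :: "'a set \<Rightarrow> ('a \<Rightarrow> 'a \<Rightarrow> real) \<Rightarrow> real" where
  "diam_on X d = Sup {d x y | x y. x \<in> X \<and> y \<in> X}"

definition class_U :: "'a set \<Rightarrow> ('a \<Rightarrow> 'a \<Rightarrow> real) \<Rightarrow> bool" where
  "class_U X d \<longleftrightarrow> finite X \<and> X \<noteq> {} \<and> ultrametric_on X d \<and> card (Sp X d) = card X - 1"

definition diametral_edge :: "'a set \<Rightarrow> ('a \<Rightarrow> 'a \<Rightarrow> real) \<Rightarrow> 'a \<Rightarrow> 'a \<Rightarrow> bool" where
  "diametral_edge X d u v \<longleftrightarrow> u \<in> X \<and> v \<in> X \<and> u \<noteq> v \<and> d u v = diam_on X d"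

definition complete_bipartite :: "'a set \<Rightarrow> ('a \<Rightarrow> 'a \<Rightarrow> bool) \<Rightarrow> 'a set \<Rightarrow> 'a set \<Rightarrow> bool" where
  "complete_bipartite X E X1 X2 \<longleftrightarrow>
     X1 \<noteq> {} \<and> X2 \<noteq> {} \<and> X1 \<inter> X2 = {} \<and> X1 \<union> X2 = X \<and>
     (\<forall>u\<in>X. \<forall>v\<in>X. E u v \<longleftrightarrow> ((u \<in> X1 \<and> v \<in> X2) \<or> (u \<in> X2 \<and> v \<in> X1)))"

end

theory Submission
  imports Defs
begin

text \<open>Removing one endpoint of a shortest edge from a finite ultrametric space loses at most
  one distance, since by the isosceles property both endpoints see every other point at the same
  distance; hence \<open>card (Sp Y d) \<le> card Y - 1\<close> for every finite ultrametric space Y.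
  If the diametral graph is complete bipartite, every distance across the parts is the diameter
  and no distance inside a part is, so Sp X is Sp X1 \<union> Sp X2 together with the new value
  diam X. As X attains the bound, \<open>card (Sp X1 d \<union> Sp X2 d) = card X - 2\<close>, which is at least
  \<open>card (Sp X1 d) + card (Sp X2 d)\<close> by the bound for the parts; so the union is disjoint.\<close>

lemma finite_Sp: "finite Y \<Longrightarrow> finite (Sp Y d)"
proof -
  assume "finite Y"
  moreover have "Sp Y d \<subseteq> (\<lambda>(x, y). d x y) ` (Y \<times> Y)"
    unfolding Sp_def by auto
  ultimately show ?thesis
    by (meson finite_SigmaI finite_imageI finite_subset)
qed

lemma Sp_memI: "x \<in> Y \<Longrightarrow> y \<in> Y \<Longrightarrow> x \<noteq> y \<Longrightarrow> d x y \<in> Sp Y d"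
  unfolding Sp_def by blast

lemma SpE:
  assumes "t \<in> Sp Y d"
  obtains x y where "x \<in> Y" "y \<in> Y" "x \<noteq> y" "t = d x y"
  using assms unfolding Sp_def by blast

lemma Sp_mono: "A \<subseteq> B \<Longrightarrow> Sp A d \<subseteq> Sp B d"
  unfolding Sp_def by blast

lemma ultrametric_on_subset: "ultrametric_on Y d \<Longrightarrow> Z \<subseteq> Y \<Longrightarrow> ultrametric_on Z d"
  unfolding ultrametric_on_def metric_on_def by blast

lemma ultrametric_on_sym: "ultrametric_on Y d \<Longrightarrow> x \<in> Y \<Longrightarrow> y \<in> Y \<Longrightarrow> d x y = d y x"
  unfolding ultrametric_on_def metric_on_def by simp

lemma ultrametric_on_isosceles:
  assumes "ultrametric_on Y d" "a \<in> Y" "b \<in> Y" "z \<in> Y"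
    and "d a b \<le> d a z" "d a b \<le> d b z"
  shows "d a z = d b z"
proof -
  have "d a z \<le> max (d a b) (d b z)" "d b z \<le> max (d b a) (d a z)"
    using assms(1-4) unfolding ultrametric_on_def by blast+
  moreover have "d b a = d a b"
    using ultrametric_on_sym assms(1-3) by metis
  ultimately show ?thesis
    using assms(5,6) by linarith
qed

lemma Sp_subset_insert_Sp_remove:
  assumes um: "ultrametric_on Y d" and ab: "a \<in> Y" "b \<in> Y" "a \<noteq> b"
    and ab_min: "\<And>t. t \<in> Sp Y d \<Longrightarrow> d a b \<le> t"
  shows "Sp Y d \<subseteq> insert (d a b) (Sp (Y - {a}) d)"
proof
  fix t assume "t \<in> Sp Y d"
  then obtain x y where xy: "x \<in> Y" "y \<in> Y" "x \<noteq> y" "t = d x y"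
    by (rule SpE)
  show "t \<in> insert (d a b) (Sp (Y - {a}) d)"
  proof (cases "x = a \<or> y = a")
    case False
    then show ?thesis
      using Sp_memI[of x "Y - {a}" y d] xy by simp
  next
    case True
    obtain z where z: "z \<in> Y" "z \<noteq> a" "t = d a z"
    proof (cases "x = a")
      case True
      then show ?thesis
        using that xy by blast
    next
      case False
      then show ?thesis
        using that[of x] xy True ultrametric_on_sym[OF um xy(1,2)] by simp
    qed
    show ?thesis
    proof (cases "z = b")
      case False
      have "d a z \<in> Sp Y d" "d b z \<in> Sp Y d"
        using Sp_memI ab z False by metis+
      then have "t = d b z"
        using ultrametric_on_isosceles[OF um ab(1,2) z(1)] ab_min z(3) by simp
      then show ?thesis
        using Sp_memI[of b "Y - {a}" z d] ab z False by simp
    qed (use z in simp)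
  qed
qed

lemma card_Sp_le:
  assumes "finite Y" "ultrametric_on Y d"
  shows "card (Sp Y d) \<le> card Y - 1"
  using assms
proof (induction "card Y" arbitrary: Y rule: less_induct)
  case less
  show ?case
  proof (cases "Sp Y d = {}")
    case False
    have fin: "finite (Sp Y d)"
      using finite_Sp less.prems(1) .
    then have "Min (Sp Y d) \<in> Sp Y d"
      using False by simp
    then obtain a b where ab: "a \<in> Y" "b \<in> Y" "a \<noteq> b" "Min (Sp Y d) = d a b"
      by (rule SpE)
    have "\<And>t. t \<in> Sp Y d \<Longrightarrow> d a b \<le> t"
      using Min_le[OF fin] ab(4) by simp
    then have "Sp Y d \<subseteq> insert (d a b) (Sp (Y - {a}) d)"
      using Sp_subset_insert_Sp_remove[OF less.prems(2) ab(1-3)] by blast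
    then have "card (Sp Y d) \<le> card (insert (d a b) (Sp (Y - {a}) d))"
      using less.prems(1) by (simp add: card_mono finite_Sp)
    also have "\<dots> \<le> Suc (card (Sp (Y - {a}) d))"
      by (simp add: card_insert_le_m1)
    finally have "card (Sp Y d) \<le> Suc (card (Sp (Y - {a}) d))" .
    moreover have "card (Sp (Y - {a}) d) \<le> card (Y - {a}) - 1"
    proof (rule less.hyps)
      show "card (Y - {a}) < card Y"
        using card_Diff1_less less.prems(1) ab(1) .
      show "ultrametric_on (Y - {a}) d"
        using ultrametric_on_subset less.prems(2) by blast
    qed (use less.prems(1) in simp)
    moreover have "card (Y - {a}) \<noteq> 0"
      using ab(2,3) less.prems(1) by auto
    ultimately show ?thesis
      using card_Diff_singleton[OF ab(1)] by linarith
  qed simp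
qed

lemma card_Sp_parts_le:
  assumes "finite X" "ultrametric_on X d"
    and "X1 \<noteq> {}" "X2 \<noteq> {}" "X1 \<inter> X2 = {}" "X1 \<union> X2 = X"
  shows "card (Sp X1 d) + card (Sp X2 d) + 2 \<le> card X"
proof -
  have sub: "X1 \<subseteq> X" "X2 \<subseteq> X"
    using assms(6) by auto
  then have fin: "finite X1" "finite X2"
    using assms(1) finite_subset by auto
  have "card (Sp X1 d) \<le> card X1 - 1" "card (Sp X2 d) \<le> card X2 - 1"
    using card_Sp_le[OF fin(1) ultrametric_on_subset[OF assms(2) sub(1)]]
      card_Sp_le[OF fin(2) ultrametric_on_subset[OF assms(2) sub(2)]] .
  moreover have "card X1 \<noteq> 0" "card X2 \<noteq> 0"
    using fin assms(3,4) by simp_all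
  moreover have "card X = card X1 + card X2"
    using card_Un_disjoint[OF fin assms(5)] assms(6) by simp
  ultimately show ?thesis
    by linarith
qed

lemma disjoint_if_card_Un_ge:
  assumes "finite A" "finite B" "card A + card B \<le> card (A \<union> B)"
  shows "A \<inter> B = {}"
  using card_Un_Int[OF assms(1,2)] assms by simp

lemma complete_bipartiteD:
  assumes "complete_bipartite X E X1 X2"
  shows "X1 \<noteq> {}" "X2 \<noteq> {}" "X1 \<inter> X2 = {}" "X1 \<union> X2 = X"
  using assms unfolding complete_bipartite_def by auto

lemma complete_bipartite_commute:
  "complete_bipartite X E X1 X2 \<longleftrightarrow> complete_bipartite X E X2 X1"
  unfolding complete_bipartite_def by blast

lemma diametral_cross_dist:
  assumes "complete_bipartite X (diametral_edge X d) X1 X2" "u \<in> X1" "v \<in> X2"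
  shows "d u v = diam_on X d" "d v u = diam_on X d"
  using assms unfolding complete_bipartite_def diametral_edge_def by blast+

lemma diam_notin_Sp_part:
  assumes "complete_bipartite X (diametral_edge X d) X1 X2"
  shows "diam_on X d \<notin> Sp X1 d"
proof
  assume "diam_on X d \<in> Sp X1 d"
  then obtain x y where xy: "x \<in> X1" "y \<in> X1" "x \<noteq> y" "diam_on X d = d x y"
    by (rule SpE)
  have parts: "X1 \<inter> X2 = {}" "X1 \<subseteq> X"
    using complete_bipartiteD[OF assms] by auto
  then have "diametral_edge X d x y"
    using xy unfolding diametral_edge_def by auto
  then show False
    using assms parts xy(1,2) unfolding complete_bipartite_def by blast
qed

lemma Sp_Un_cross_const:
  assumes "X1 \<noteq> {}" "X2 \<noteq> {}" "X1 \<inter> X2 = {}"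
    and cross: "\<And>u v. u \<in> X1 \<Longrightarrow> v \<in> X2 \<Longrightarrow> d u v = D \<and> d v u = D"
  shows "Sp (X1 \<union> X2) d = Sp X1 d \<union> Sp X2 d \<union> {D}"
proof
  show "Sp (X1 \<union> X2) d \<subseteq> Sp X1 d \<union> Sp X2 d \<union> {D}"
  proof
    fix t assume "t \<in> Sp (X1 \<union> X2) d"
    then obtain x y where xy: "x \<in> X1 \<union> X2" "y \<in> X1 \<union> X2" "x \<noteq> y" "t = d x y"
      by (rule SpE)
    then show "t \<in> Sp X1 d \<union> Sp X2 d \<union> {D}"
      using Sp_memI[of x X1 y d] Sp_memI[of x X2 y d] cross[of x y] cross[of y x] by auto
  qed
  obtain u v where "u \<in> X1" "v \<in> X2"
    using assms(1,2) by blast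
  then have "D \<in> Sp (X1 \<union> X2) d"
    using Sp_memI[of u "X1 \<union> X2" v d] cross assms(3) by blast
  then show "Sp X1 d \<union> Sp X2 d \<union> {D} \<subseteq> Sp (X1 \<union> X2) d"
    using Sp_mono[of X1 "X1 \<union> X2" d] Sp_mono[of X2 "X1 \<union> X2" d] by blast
qed

lemma Sp_diametral_bipartite:
  assumes "complete_bipartite X (diametral_edge X d) X1 X2"
  shows "Sp X d = Sp X1 d \<union> Sp X2 d \<union> {diam_on X d}"
proof -
  note parts = complete_bipartiteD[OF assms]
  have "Sp (X1 \<union> X2) d = Sp X1 d \<union> Sp X2 d \<union> {diam_on X d}"
    by (rule Sp_Un_cross_const[OF parts(1-3)]) (simp add: diametral_cross_dist[OF assms])
  then show ?thesis
    by (simp only: parts(4))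
qed

theorem lemma6:
  fixes X X1 X2 :: "'a set" and d :: "'a \<Rightarrow> 'a \<Rightarrow> real"
  assumes "class_U X d"
    and "card X \<ge> 2"
    and "complete_bipartite X (diametral_edge X d) X1 X2"
  shows "Sp X d = Sp X1 d \<union> Sp X2 d \<union> {diam_on X d} \<and> Sp X1 d \<inter> Sp X2 d = {}"
proof -
  have fin: "finite X" and um: "ultrametric_on X d" and card_Sp: "card (Sp X d) = card X - 1"
    using assms(1) unfolding class_U_def by auto
  note parts = complete_bipartiteD[OF assms(3)]
  have split: "Sp X d = Sp X1 d \<union> Sp X2 d \<union> {diam_on X d}"
    using Sp_diametral_bipartite[OF assms(3)] .
  have diam_new: "diam_on X d \<notin> Sp X1 d \<union> Sp X2 d"
    using diam_notin_Sp_part[OF assms(3)]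
      diam_notin_Sp_part[OF complete_bipartite_commute[THEN iffD1, OF assms(3)]] by blast
  have fin_Sp: "finite (Sp X1 d)" "finite (Sp X2 d)"
    using finite_Sp fin parts(4) by auto
  have "card (Sp X d) = Suc (card (Sp X1 d \<union> Sp X2 d))"
    unfolding split using diam_new fin_Sp by simp
  then have "card (Sp X1 d) + card (Sp X2 d) \<le> card (Sp X1 d \<union> Sp X2 d)"
    using card_Sp card_Sp_parts_le[OF fin um parts] by linarith
  then show ?thesis
    using split disjoint_if_card_Un_ge[OF fin_Sp] by blast
qed

end
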